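(* Let $m\ge2$ and let $r\ge0$ be the integer with $2^r\,\|\,m+1$. Then for every $a\in\{1,2,\dots,m\}$, $a$ is periodic under $f_2$ (i.e. $f_2^t(a)=a$ for some $t\ge1$) if and only if $2^r\,\|\,a$. Equivalently, the union of all fixed sets $K(x)\ne\{0\}$ of the two-digit base-$m$ Kaprekar map equals $\{a(m-1):1\le a\le m,\ 2^r\,\|\,a\}$.
   Context: For an integer $m\ge2$, $X=\{0,1,\dots,m^2-1\}$, each element written with exactly two base-$m$ digits (leading zeros allowed), and $f(x)=D(x)-A(x)$ is the two-digit base-$m$ Kaprekar map ($D(x)$, $A(x)$: digits of $x$ in nonincreasing, resp. nondecreasing, order). The map $f_2:\{0,\dots,m\}\to\{0,\dots,m\}$ is defined by $f(a(m-1))=f_2(a)(m-1)$; explicitly $f_2(0)=0$ and $f_2(a)=|2a-m-1|$ for $1\le a\le m$. For integers $r\ge0$ and $N\neq0$, $2^r\,\|\,N$ means $2^r\mid N$ and $2^{r+1}\nmid N$. The fixed set of $x$ is $K(x)=\{f^{S(x)+i}(x):0\le i<T(x)\}$, where $S(x)$ is the least $s\ge0$ with $f^{s+t}(x)=f^s(x)$ for some $t\ge1$ and $T(x)$ the least such $t$ for $s=S(x)$. *)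

theory Defs
  imports Main
begin

definition exdvd2 :: "nat \<Rightarrow> nat \<Rightarrow> bool" where
  "exdvd2 r N \<longleftrightarrow> 2 ^ r dvd N \<and> \<not> 2 ^ (r + 1) dvd N"

definition kapD :: "nat \<Rightarrow> nat \<Rightarrow> nat" where
  "kapD m x = max (x div m) (x mod m) * m + min (x div m) (x mod m)"

definition kapA :: "nat \<Rightarrow> nat \<Rightarrow> nat" where
  "kapA m x = min (x div m) (x mod m) * m + max (x div m) (x mod m)"

definition kap :: "nat \<Rightarrow> nat \<Rightarrow> nat" where
  "kap m x = kapD m x - kapA m x"

definition f2 :: "nat \<Rightarrow> nat \<Rightarrow> nat" where
  "f2 m a = (if a = 0 then 0 else nat \<bar>2 * int a - int m - 1\<bar>)"

definition kapS :: "nat \<Rightarrow> nat \<Rightarrow> nat" where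
  "kapS m x = (LEAST s. \<exists>t\<ge>1. (kap m ^^ (s + t)) x = (kap m ^^ s) x)"

definition kapT :: "nat \<Rightarrow> nat \<Rightarrow> nat" where
  "kapT m x = (LEAST t. t \<ge> 1 \<and> (kap m ^^ (kapS m x + t)) x = (kap m ^^ kapS m x) x)"

definition kapK :: "nat \<Rightarrow> nat \<Rightarrow> nat set" where
  "kapK m x = {(kap m ^^ (kapS m x + i)) x | i. i < kapT m x}"

end

theory Submission
  imports Defs "HOL-Combinatorics.Cycles"
begin

(* The Kaprekar map sends a number with base-m digits p, q to |p - q| (m - 1), and on the
   multiples a (m - 1) it acts as a \<mapsto> f2 a. Hence the nonzero elements of fixed sets are
   exactly the a (m - 1) with a periodic under f2 = |2a - (m + 1)|.
   Since 2^r exactly divides m + 1, each step of f2 gains a factor 2 as long as the 2-adic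
   valuation is below r, and it maps numbers of valuation exactly r to such numbers. A periodic
   point lies in the image of every iterate, so it has valuation exactly r. Conversely, f2 is
   injective on the finite set of such a in {1..m}: f2 a = f2 b with a \<noteq> b forces a + b = m + 1,
   but the sum of two numbers of valuation r has valuation > r. So f2 permutes this set and all
   its points are periodic. *)

lemma funpow_funpow_apply: "(f ^^ m) ((f ^^ n) x) = (f ^^ (m + n)) x"
  by (simp add: funpow_add)

definition periodic_point :: "('a \<Rightarrow> 'a) \<Rightarrow> 'a \<Rightarrow> bool" where
  "periodic_point f a \<longleftrightarrow> (\<exists>t\<ge>1. (f ^^ t) a = a)"

lemma periodic_point_funpow_preimage:
  assumes "periodic_point f a"
  obtains k where "(f ^^ n) ((f ^^ k) a) = a"
proof -
  obtain t where t: "t \<ge> 1" "(f ^^ t) a = a"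
    using assms unfolding periodic_point_def by blast
  have "n + (t * n - n) = t * n"
    using t(1) by (simp add: add_diff_inverse_nat)
  then have "(f ^^ n) ((f ^^ (t * n - n)) a) = (f ^^ (t * n)) a"
    by (simp add: funpow_funpow_apply)
  also have "\<dots> = a"
    using funpow_mod_eq[where f = f and n = t and x = a and m = "t * n"] t(2) by simp
  finally show ?thesis by (rule that)
qed

lemma periodic_point_funpow:
  assumes "periodic_point f a"
  shows "periodic_point f ((f ^^ n) a)"
proof -
  obtain t where t: "t \<ge> 1" "(f ^^ t) a = a"
    using assms unfolding periodic_point_def by blast
  have "(f ^^ t) ((f ^^ n) a) = (f ^^ n) ((f ^^ t) a)"
    by (simp add: funpow_funpow_apply add.commute)
  with t show ?thesis unfolding periodic_point_def by auto
qed

lemma periodic_point_if_inj_on_finite: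
  assumes "finite S" "inj_on f S" "f ` S \<subseteq> S" "a \<in> S"
  shows "periodic_point f a"
proof -
  define g where "g x = (if x \<in> S then f x else x)" for x
  have "g permutes S"
    by (rule inj_imp_permutes) (use assms in \<open>auto simp: g_def inj_on_def\<close>)
  then have "permutation g"
    using assms(1) permutation_permutes by blast
  then obtain n where n: "g ^^ n = id" "n > 0"
    by (rule permutation_is_nilpotent)
  have "(g ^^ k) a = (f ^^ k) a \<and> (f ^^ k) a \<in> S" for k
    by (induction k) (use assms in \<open>auto simp: g_def\<close>)
  then have "(f ^^ n) a = a"
    using n(1) by (metis id_apply)
  with n(2) show ?thesis
    unfolding periodic_point_def by (auto intro: Suc_leI)
qed

lemma funpow_eventually_periodic:
  assumes "finite S" "f ` S \<subseteq> S" "x \<in> S"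
  shows "\<exists>s. \<exists>t\<ge>1. (f ^^ (s + t)) x = (f ^^ s) x"
proof -
  have orbit: "(f ^^ k) x \<in> S" for k
    by (induction k) (use assms in auto)
  have "\<not> inj_on (\<lambda>k. (f ^^ k) x) {0..card S}"
  proof
    assume "inj_on (\<lambda>k. (f ^^ k) x) {0..card S}"
    then have "card {0..card S} \<le> card S"
      using card_inj_on_le[OF _ _ assms(1)] orbit by blast
    then show False by simp
  qed
  then obtain i j where "i < j" "(f ^^ i) x = (f ^^ j) x"
    unfolding inj_on_def by (metis linorder_neqE_nat)
  then show ?thesis
    by (intro exI[of _ i] exI[of _ "j - i"]) auto
qed

lemma exdvd2_imp_nonzero: "exdvd2 r x \<Longrightarrow> x \<noteq> 0"
  unfolding exdvd2_def by (metis dvd_0_right)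

lemma exdvd2_add_iff:
  assumes "2 ^ (r + 1) dvd y"
  shows "exdvd2 r (x + y) \<longleftrightarrow> exdvd2 r x"
proof -
  have "2 ^ r dvd y"
    using dvd_trans[OF le_imp_power_dvd[of r "r + 1"] assms] by simp
  with assms show ?thesis
    unfolding exdvd2_def by (simp add: dvd_add_left_iff)
qed

lemma exdvd2_iff_exdvd2_of_dvd_add:
  assumes "2 ^ (r + 1) dvd x + y"
  shows "exdvd2 r x \<longleftrightarrow> exdvd2 r y"
proof -
  have "2 ^ r dvd x + y"
    using dvd_trans[OF le_imp_power_dvd[of r "r + 1"] assms] by simp
  with assms show ?thesis
    unfolding exdvd2_def by (metis dvd_add_right_iff add.commute)
qed

lemma exdvd2_add_exdvd2:
  assumes "exdvd2 r x" "exdvd2 r y"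
  shows "2 ^ (r + 1) dvd x + y"
proof -
  obtain x' y' where "x = 2 ^ r * x'" "y = 2 ^ r * y'"
    using assms unfolding exdvd2_def by (auto elim!: dvdE)
  moreover from assms this have "odd x'" "odd y'"
    unfolding exdvd2_def by auto
  ultimately show ?thesis
    by (auto simp: distrib_left[symmetric] elim!: oddE)
qed

lemma f2_0 [simp]: "f2 m 0 = 0"
  by (simp add: f2_def)

lemma f2_eq:
  assumes "1 \<le> a"
  shows "f2 m a = (if m + 1 \<le> 2 * a then 2 * a - (m + 1) else m + 1 - 2 * a)"
  using assms unfolding f2_def by auto

lemma f2_le: "a \<le> m \<Longrightarrow> f2 m a \<le> m"
  unfolding f2_def by auto

lemma f2_funpow_le: "a \<le> m \<Longrightarrow> (f2 m ^^ k) a \<le> m"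
  by (induction k) (auto intro: f2_le)

lemma f2_eq_f2_iff:
  assumes "1 \<le> a" "1 \<le> b"
  shows "f2 m a = f2 m b \<longleftrightarrow> a = b \<or> a + b = m + 1"
  using assms by (auto simp: f2_eq)

lemma f2_dvd:
  assumes "2 ^ j dvd b" "2 ^ (j + 1) dvd m + 1"
  shows "2 ^ (j + 1) dvd f2 m b"
proof (cases "b = 0")
  case False
  have "2 ^ (j + 1) dvd 2 * b"
    using assms(1) by simp
  with False assms(2) show ?thesis
    by (auto simp: f2_eq dvd_diff_nat)
qed simp

lemma f2_funpow_dvd:
  assumes "j \<le> r" "2 ^ r dvd m + 1"
  shows "2 ^ j dvd (f2 m ^^ j) b"
  using assms(1)
proof (induction j)
  case (Suc j)
  have "2 ^ (j + 1) dvd m + 1"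
    using Suc.prems assms(2) by (metis Suc_eq_plus1 dvd_trans le_imp_power_dvd)
  with Suc show ?case
    using f2_dvd[of j "(f2 m ^^ j) b" m] by simp
qed simp

lemma f2_exdvd2:
  assumes "exdvd2 r (m + 1)" "2 ^ r dvd a" "1 \<le> a"
  shows "exdvd2 r (f2 m a)"
proof -
  have a: "2 ^ (r + 1) dvd 2 * a"
    using assms(2) by simp
  show ?thesis
  proof (cases "m + 1 \<le> 2 * a")
    case True
    then have "2 * a = f2 m a + (m + 1)"
      using assms(3) by (simp add: f2_eq)
    with a assms(1) show ?thesis
      using exdvd2_iff_exdvd2_of_dvd_add[of r "f2 m a" "m + 1"] by simp
  next
    case False
    then have "m + 1 = f2 m a + 2 * a"
      using assms(3) by (simp add: f2_eq)
    with a assms(1) show ?thesis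
      using exdvd2_add_iff[of r "2 * a" "f2 m a"] by simp
  qed
qed

lemma f2_periodic_point_imp_exdvd2:
  assumes "exdvd2 r (m + 1)" "1 \<le> a" "periodic_point (f2 m) a"
  shows "exdvd2 r a"
proof -
  obtain k where k: "f2 m ((f2 m ^^ k) a) = a"
    using periodic_point_funpow_preimage[OF assms(3), of 1] by auto
  define b where "b = (f2 m ^^ k) a"
  \<comment> \<open>b has a preimage under f2 ^^ r, and r steps of f2 always produce a multiple of 2 ^ r.\<close>
  obtain l where l: "(f2 m ^^ r) ((f2 m ^^ l) b) = b"
    using periodic_point_funpow_preimage[OF periodic_point_funpow[OF assms(3)]]
    unfolding b_def by blast
  have "2 ^ r dvd (f2 m ^^ r) ((f2 m ^^ l) b)"
    by (rule f2_funpow_dvd) (use assms(1) in \<open>auto simp: exdvd2_def\<close>)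
  then have "2 ^ r dvd b"
    using l by simp
  moreover have "b \<noteq> 0"
  proof
    assume "b = 0"
    with k b_def have "a = 0" by simp
    with assms(2) show False by simp
  qed
  ultimately have "exdvd2 r (f2 m b)"
    by (intro f2_exdvd2[OF assms(1)]) auto
  with k show ?thesis
    unfolding b_def by simp
qed

lemma f2_periodic_point_if_exdvd2:
  assumes "exdvd2 r (m + 1)" "1 \<le> a" "a \<le> m" "exdvd2 r a"
  shows "periodic_point (f2 m) a"
proof (rule periodic_point_if_inj_on_finite)
  let ?S = "{a. 1 \<le> a \<and> a \<le> m \<and> exdvd2 r a}"
  show "finite ?S" by simp
  show "f2 m ` ?S \<subseteq> ?S"
  proof
    fix y
    assume "y \<in> f2 m ` ?S"
    then obtain x where x: "x \<in> ?S" "y = f2 m x"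
      by blast
    then have "exdvd2 r y"
      using f2_exdvd2[OF assms(1)] by (simp add: exdvd2_def)
    moreover from this have "y \<noteq> 0"
      by (rule exdvd2_imp_nonzero)
    ultimately show "y \<in> ?S"
      using x f2_le by auto
  qed
  show "inj_on (f2 m) ?S"
  proof (rule inj_onI)
    fix x y
    assume "x \<in> ?S" "y \<in> ?S" "f2 m x = f2 m y"
    moreover have "x + y \<noteq> m + 1" if "exdvd2 r x" "exdvd2 r y"
      using exdvd2_add_exdvd2[OF that] assms(1) unfolding exdvd2_def by auto
    ultimately show "x = y"
      using f2_eq_f2_iff by blast
  qed
  show "a \<in> ?S" using assms(2-4) by simp
qed

lemma kap_eq_digit_diff:
  "kap m x = (max (x div m) (x mod m) - min (x div m) (x mod m)) * (m - 1)"
proof -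
  define p where "p = max (x div m) (x mod m)"
  define q where "q = min (x div m) (x mod m)"
  have "q \<le> p"
    unfolding p_def q_def by simp
  then obtain d where d: "p = q + d"
    using le_Suc_ex by blast
  have "kap m x = (p * m + q) - (q * m + p)"
    unfolding kap_def kapD_def kapA_def p_def q_def by simp
  also have "\<dots> = (p - q) * (m - 1)"
    using d by (simp add: algebra_simps diff_mult_distrib2)
  finally show ?thesis unfolding p_def q_def .
qed

lemma kap_0 [simp]: "kap m 0 = 0"
  by (simp add: kap_eq_digit_diff)

lemma kap_funpow_0 [simp]: "(kap m ^^ k) 0 = 0"
  by (induction k) simp_all

lemma digit_diff_le:
  fixes x m :: nat
  assumes "x < m ^ 2"
  shows "max (x div m) (x mod m) - min (x div m) (x mod m) \<le> m - 1"
proof -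
  have "m > 0" using assms by (cases m) auto
  then have "x div m < m" "x mod m < m"
    using assms by (simp_all add: power2_eq_square div_less_iff_less_mult)
  then show ?thesis by linarith
qed

lemma kap_lt:
  assumes "x < m ^ 2"
  shows "kap m x < m ^ 2"
proof -
  have "kap m x \<le> (m - 1) * (m - 1)"
    unfolding kap_eq_digit_diff using digit_diff_le[OF assms] by (rule mult_right_mono) simp
  also have "\<dots> < m ^ 2"
    using assms by (cases m) (auto simp: power2_eq_square intro: mult_strict_mono)
  finally show ?thesis .
qed

lemma kap_funpow_lt: "x < m ^ 2 \<Longrightarrow> (kap m ^^ k) x < m ^ 2"
  by (induction k) (auto intro: kap_lt)

lemma kap_mult_pred:
  assumes "m \<ge> 2" "a \<le> m"
  shows "kap m (a * (m - 1)) = f2 m a * (m - 1)"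
proof (cases "a = 0")
  case False
  \<comment> \<open>The base-m digits of a(m-1) are a-1 and m-a.\<close>
  have e: "a * (m - 1) = (a - 1) * m + (m - a)"
    using False assms by (cases a) (auto simp: algebra_simps diff_mult_distrib2)
  have "m - a < m" using False assms by simp
  then have "a * (m - 1) div m = a - 1" "a * (m - 1) mod m = m - a"
    unfolding e by simp_all
  moreover have "max (a - 1) (m - a) - min (a - 1) (m - a) = f2 m a"
    using False assms by (simp add: f2_eq max_def min_def mult_2)
  ultimately show ?thesis
    unfolding kap_eq_digit_diff by simp
qed simp

lemma kap_funpow_mult_pred:
  assumes "m \<ge> 2" "a \<le> m"
  shows "(kap m ^^ k) (a * (m - 1)) = (f2 m ^^ k) a * (m - 1)"
proof (induction k)
  case (Suc k)
  then show ?case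
    using kap_mult_pred[OF assms(1) f2_funpow_le[OF assms(2), of k]] by simp
qed simp

lemma kap_periodic_point_iff:
  assumes "m \<ge> 2"
  shows "z < m ^ 2 \<and> z \<noteq> 0 \<and> periodic_point (kap m) z
     \<longleftrightarrow> (\<exists>a. z = a * (m - 1) \<and> 1 \<le> a \<and> a \<le> m \<and> periodic_point (f2 m) a)"
proof
  assume z: "z < m ^ 2 \<and> z \<noteq> 0 \<and> periodic_point (kap m) z"
  then have "periodic_point (kap m) z"
    by blast
  then obtain k where k: "(kap m ^^ 1) ((kap m ^^ k) z) = z"
    by (rule periodic_point_funpow_preimage)
  define w where "w = (kap m ^^ k) z"
  have "w < m ^ 2"
    unfolding w_def using z kap_funpow_lt by blast
  define c where "c = max (w div m) (w mod m) - min (w div m) (w mod m)"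
  have zc: "z = c * (m - 1)"
    using k unfolding c_def w_def[symmetric] kap_eq_digit_diff[symmetric] by simp
  have cm: "c \<le> m"
    unfolding c_def using digit_diff_le[OF \<open>w < m ^ 2\<close>] by simp
  obtain t where t: "t \<ge> 1" "(kap m ^^ t) z = z"
    using z unfolding periodic_point_def by blast
  have "(f2 m ^^ t) c * (m - 1) = (kap m ^^ t) z"
    unfolding zc by (rule kap_funpow_mult_pred[OF assms cm, symmetric])
  also have "\<dots> = c * (m - 1)"
    unfolding t(2) by (rule zc)
  finally have "(f2 m ^^ t) c = c"
    using assms by simp
  with t(1) have "periodic_point (f2 m) c"
    unfolding periodic_point_def by blast
  moreover have "c \<noteq> 0"
    using z zc by (metis mult_zero_left)
  ultimately show "\<exists>a. z = a * (m - 1) \<and> 1 \<le> a \<and> a \<le> m \<and> periodic_point (f2 m) a"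
    using zc cm by (intro exI[of _ c]) auto
next
  assume "\<exists>a. z = a * (m - 1) \<and> 1 \<le> a \<and> a \<le> m \<and> periodic_point (f2 m) a"
  then obtain a where a: "z = a * (m - 1)" "1 \<le> a" "a \<le> m" "periodic_point (f2 m) a"
    by blast
  then obtain t where t: "t \<ge> 1" "(f2 m ^^ t) a = a"
    unfolding periodic_point_def by blast
  have "(kap m ^^ t) z = z"
    unfolding a(1) kap_funpow_mult_pred[OF assms a(3)] t(2) ..
  with t(1) have "periodic_point (kap m) z"
    unfolding periodic_point_def by blast
  moreover have "z \<noteq> 0"
    using a(1,2) assms by simp
  moreover have "z < m ^ 2"
  proof -
    have "z \<le> m * (m - 1)"
      using a(1,3) by simp
    also have "\<dots> < m ^ 2"
      using assms by (simp add: power2_eq_square)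
    finally show ?thesis .
  qed
  ultimately show "z < m ^ 2 \<and> z \<noteq> 0 \<and> periodic_point (kap m) z"
    by blast
qed

lemma kapT_ge_1_and_cycle:
  assumes "x < m ^ 2"
  shows "kapT m x \<ge> 1 \<and> (kap m ^^ (kapS m x + kapT m x)) x = (kap m ^^ kapS m x) x"
proof -
  have "\<exists>s. \<exists>t\<ge>1. (kap m ^^ (s + t)) x = (kap m ^^ s) x"
    by (rule funpow_eventually_periodic[of "{..<m ^ 2}"]) (use assms kap_lt in auto)
  then have "\<exists>t\<ge>1. (kap m ^^ (kapS m x + t)) x = (kap m ^^ kapS m x) x"
    unfolding kapS_def by (rule LeastI_ex)
  then show ?thesis
    unfolding kapT_def by (metis (mono_tags, lifting) LeastI)
qed

lemma kapK_periodic: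
  assumes "x < m ^ 2" "y \<in> kapK m x"
  shows "(kap m ^^ kapT m x) y = y"
proof -
  obtain i where y: "y = (kap m ^^ (kapS m x + i)) x"
    using assms(2) unfolding kapK_def by auto
  have "(kap m ^^ kapT m x) y = (kap m ^^ i) ((kap m ^^ (kapS m x + kapT m x)) x)"
    unfolding y by (simp add: funpow_funpow_apply ac_simps)
  also have "\<dots> = y"
    using kapT_ge_1_and_cycle[OF assms(1)] unfolding y by (simp add: funpow_funpow_apply ac_simps)
  finally show ?thesis .
qed

lemma kapK_subset_0_if_0_mem:
  assumes "x < m ^ 2" "0 \<in> kapK m x"
  shows "kapK m x \<subseteq> {0}"
proof
  fix z
  assume z: "z \<in> kapK m x"
  obtain i where i: "i < kapT m x" "(kap m ^^ (kapS m x + i)) x = 0"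
    using assms(2) unfolding kapK_def by auto
  obtain j where j: "z = (kap m ^^ (kapS m x + j)) x"
    using z unfolding kapK_def by auto
  \<comment> \<open>Running once more around the cycle from z passes through 0, which kap fixes.\<close>
  have "z = (kap m ^^ kapT m x) z"
    using kapK_periodic[OF assms(1) z] by simp
  also have "\<dots> = (kap m ^^ (j + kapT m x - i)) ((kap m ^^ (kapS m x + i)) x)"
    using i(1) unfolding j by (simp add: funpow_funpow_apply ac_simps)
  also have "\<dots> = 0"
    using i(2) by simp
  finally show "z \<in> {0}" by simp
qed

lemma kapK_self:
  assumes "periodic_point (kap m) y"
  shows "y \<in> kapK m y"
proof -
  have S: "kapS m y = 0"
    unfolding kapS_def by (rule Least_equality) (use assms in \<open>auto simp: periodic_point_def\<close>)
  obtain t where t: "t \<ge> 1" "(kap m ^^ t) y = y"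
    using assms unfolding periodic_point_def by blast
  have "kapT m y \<ge> 1"
    unfolding kapT_def S by (rule LeastI2[of _ t]) (use t in simp_all)
  then show ?thesis
    unfolding kapK_def S by (auto intro!: exI[of _ 0])
qed

lemma Union_kapK_eq_periodic_points:
  "\<Union> {kapK m x | x. x < m ^ 2 \<and> kapK m x \<noteq> {0}}
     = {z. z < m ^ 2 \<and> z \<noteq> 0 \<and> periodic_point (kap m) z}"
proof (intro equalityI subsetI)
  fix z
  assume "z \<in> \<Union> {kapK m x | x. x < m ^ 2 \<and> kapK m x \<noteq> {0}}"
  then obtain x where x: "x < m ^ 2" "kapK m x \<noteq> {0}" "z \<in> kapK m x"
    by auto
  have "z \<noteq> 0"
  proof
    assume "z = 0"
    then have "kapK m x \<subseteq> {0}"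
      by (intro kapK_subset_0_if_0_mem[OF x(1)]) (use x(3) in simp)
    with x(2,3) show False
      by (metis empty_iff subset_singletonD)
  qed
  moreover have "periodic_point (kap m) z"
    unfolding periodic_point_def
    using kapT_ge_1_and_cycle[OF x(1)] kapK_periodic[OF x(1,3)]
    by (intro exI[of _ "kapT m x"]) simp
  moreover have "z < m ^ 2"
  proof -
    obtain i where "z = (kap m ^^ (kapS m x + i)) x"
      using x(3) unfolding kapK_def by blast
    then show ?thesis
      using kap_funpow_lt[OF x(1)] by simp
  qed
  ultimately show "z \<in> {z. z < m ^ 2 \<and> z \<noteq> 0 \<and> periodic_point (kap m) z}"
    by simp
next
  fix z
  assume "z \<in> {z. z < m ^ 2 \<and> z \<noteq> 0 \<and> periodic_point (kap m) z}"
  then have z: "z < m ^ 2" "z \<noteq> 0" "periodic_point (kap m) z"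
    by simp_all
  have zK: "z \<in> kapK m z"
    using z(3) by (rule kapK_self)
  have "kapK m z \<noteq> {0}"
  proof
    assume "kapK m z = {0}"
    with zK z(2) show False by simp
  qed
  then have "kapK m z \<in> {kapK m x | x. x < m ^ 2 \<and> kapK m x \<noteq> {0}}"
    by (intro CollectI exI[of _ z] conjI refl z(1))
  then show "z \<in> \<Union> {kapK m x | x. x < m ^ 2 \<and> kapK m x \<noteq> {0}}"
    using zK by (rule UnionI)
qed

theorem lemma3p4p1:
  fixes m r :: nat
  assumes "m \<ge> 2" and "exdvd2 r (m + 1)"
  shows "(\<forall>a \<in> {1..m}. (\<exists>t\<ge>1. (f2 m ^^ t) a = a) \<longleftrightarrow> exdvd2 r a)
       \<and> \<Union> {kapK m x | x. x < m ^ 2 \<and> kapK m x \<noteq> {0}}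
           = {a * (m - 1) | a. 1 \<le> a \<and> a \<le> m \<and> exdvd2 r a}"
proof
  have periodic_iff: "periodic_point (f2 m) a \<longleftrightarrow> exdvd2 r a" if "a \<in> {1..m}" for a
    using that f2_periodic_point_imp_exdvd2[OF assms(2)] f2_periodic_point_if_exdvd2[OF assms(2)]
    by auto
  then show "\<forall>a \<in> {1..m}. (\<exists>t\<ge>1. (f2 m ^^ t) a = a) \<longleftrightarrow> exdvd2 r a"
    unfolding periodic_point_def by blast
  have "\<Union> {kapK m x | x. x < m ^ 2 \<and> kapK m x \<noteq> {0}}
      = {z. \<exists>a. z = a * (m - 1) \<and> 1 \<le> a \<and> a \<le> m \<and> periodic_point (f2 m) a}"
    unfolding Union_kapK_eq_periodic_points kap_periodic_point_iff[OF assms(1)] ..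
  also have "\<dots> = {a * (m - 1) | a. 1 \<le> a \<and> a \<le> m \<and> exdvd2 r a}"
    by (intro Collect_cong ex_cong1) (auto simp: periodic_iff)
  finally show "\<Union> {kapK m x | x. x < m ^ 2 \<and> kapK m x \<noteq> {0}}
      = {a * (m - 1) | a. 1 \<le> a \<and> a \<le> m \<and> exdvd2 r a}" .
qed

end
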